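(* Let $\Lambda$ be a lattice of $\mathbf R^l$, $\Omega\in\mathbf R^l$, $R>0$, and assume $\Lambda^*_R\ne\emptyset$. Let $p\in\Lambda^*_R$ be such that $p\cdot\Omega=\alpha:=\alpha(\Lambda,\Omega,R)$, and assume $\alpha>0$. Let $E=\{p\}^\perp$. Then $\Lambda_0:=\Lambda\cap E$ is a lattice of $E$. Moreover, setting $(\Lambda_0)^*=\{q\in E:\ q\cdot x\in\mathbf Z\ \forall x\in\Lambda_0\}$, $(\Lambda_0)^*_{\sqrt3R/2}=\{q\in(\Lambda_0)^*:\ 0<|q|\le\sqrt3R/2\}$ and $\beta=\inf\{|q\cdot\Omega|:\ q\in(\Lambda_0)^*_{\sqrt3R/2}\}$: (i) $\dfrac{\alpha}{\beta|p|}\le\dfrac2R$; in particular $\alpha\le2\beta$; (ii) $\alpha(\Lambda,\Omega,\sqrt7R/2)\le\beta$.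
   Context: A lattice of $\mathbf R^l$ is a discrete subgroup $\Lambda$ with $\mathbf R^l/\Lambda$ of finite volume. $\Lambda^*=\{p\in\mathbf R^l:\ p\cdot\lambda\in\mathbf Z\ \forall\lambda\in\Lambda\}$, $\Lambda^*_R=\{p\in\Lambda^*:\ 0<|p|\le R\}$ with $|\cdot|$ Euclidean, $\alpha(\Lambda,\Omega,R)=\inf\{|p\cdot\Omega|:\ p\in\Lambda^*_R\}$, and $\inf\emptyset=+\infty$. *)

theory Defs
  imports "HOL-Analysis.Analysis" "HOL-Library.Extended_Real"
begin

text \<open>A lattice of a linear subspace V of a Euclidean space: a discrete additive
subgroup L of V such that V/L is compact (equivalently, for a discrete subgroup,
of finite volume).\<close>
definition lattice_of :: "'a::euclidean_space set \<Rightarrow> 'a set \<Rightarrow> bool" where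
  "lattice_of V L \<longleftrightarrow>
     subspace V \<and> L \<subseteq> V \<and> 0 \<in> L \<and>
     (\<forall>x\<in>L. \<forall>y\<in>L. x + y \<in> L \<and> - x \<in> L) \<and>
     (\<exists>e>0. \<forall>x\<in>L. x \<noteq> 0 \<longrightarrow> e \<le> norm x) \<and>
     (\<exists>K. compact K \<and> K \<subseteq> V \<and> V \<subseteq> (\<Union>l\<in>L. (\<lambda>k. l + k) ` K))"

definition dual_lattice :: "'a::euclidean_space set \<Rightarrow> 'a set" where
  "dual_lattice L = {p. \<forall>l\<in>L. p \<bullet> l \<in> \<int>}"

definition dual_R :: "'a::euclidean_space set \<Rightarrow> real \<Rightarrow> 'a set" where
  "dual_R L R = {p \<in> dual_lattice L. 0 < norm p \<and> norm p \<le> R}"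

text \<open>alpha(L, Omega, R) = inf { |p . Omega| : p in L*_R }, with inf of the empty set = +infinity.\<close>
definition alpha :: "'a::euclidean_space set \<Rightarrow> 'a \<Rightarrow> real \<Rightarrow> ereal" where
  "alpha L \<Omega> R = (INF p\<in>dual_R L R. ereal \<bar>p \<bullet> \<Omega>\<bar>)"

end

theory Submission
  imports Defs
begin

text \<open>The values p . l for l in L form a subgroup n Z of Z, so L = L0 + Z x1 with p . x1 = n.
  This makes L0 cocompact in the hyperplane E, and it shows that every q in (L0)* lifts to a whole
  coset q + (s0 + Z) p of vectors of L*.  As q is orthogonal to p, the lift q + s p has squared norm
  |q|^2 + s^2 |p|^2 and satisfies (q + s p) . Omega = alpha (s - u) with u = - q . Omega / alpha.
  For |q| <= sqrt 3 R / 2 and |q . Omega| < alpha R / (2 |p|), a lift with |s| <= R / (2 |p|) and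
  |s - u| < 1 lies in L*_R and contradicts the minimality of alpha; hence beta >= alpha R / (2 |p|),
  which is (i), and this bound is at least alpha / 2 because |p| <= R.  So |u| >= 1/2, and a lift
  with |s| <= 1 and |s - u| <= |u| lies in L*_(sqrt 7 R / 2) and has |. Omega| at most |q . Omega|,
  which gives (ii).\<close>

definition add_subgroup :: "'a::ab_group_add set \<Rightarrow> bool" where
  "add_subgroup L \<longleftrightarrow> 0 \<in> L \<and> (\<forall>x\<in>L. \<forall>y\<in>L. x + y \<in> L \<and> - x \<in> L)"

lemma lattice_of_imp_add_subgroup: "lattice_of V L \<Longrightarrow> add_subgroup L"
  by (simp add: lattice_of_def add_subgroup_def)

lemma add_subgroupD:
  assumes "add_subgroup L"
  shows add_subgroup_zero: "0 \<in> L"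
    and add_subgroup_add: "x \<in> L \<Longrightarrow> y \<in> L \<Longrightarrow> x + y \<in> L"
    and add_subgroup_minus: "x \<in> L \<Longrightarrow> - x \<in> L"
    and add_subgroup_diff: "x \<in> L \<Longrightarrow> y \<in> L \<Longrightarrow> x - y \<in> L"
  using assms unfolding add_subgroup_def diff_conv_add_uminus by blast+

lemma add_subgroup_scaleR_of_int:
  fixes x :: "'a::real_vector"
  assumes L: "add_subgroup L" and x: "x \<in> L"
  shows "of_int m *\<^sub>R x \<in> L"
proof -
  have nat: "of_nat k *\<^sub>R x \<in> L" for k
  proof (induction k)
    case 0
    then show ?case using add_subgroup_zero[OF L] by simp
  next
    case (Suc k)
    have "of_nat (Suc k) *\<^sub>R x = x + of_nat k *\<^sub>R x" by (simp add: algebra_simps)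
    then show ?case using add_subgroup_add[OF L x Suc.IH] by simp
  qed
  show ?thesis
  proof (cases m)
    case (nonneg k)
    then show ?thesis using nat[of k] by simp
  next
    case (neg k)
    then have "of_int m *\<^sub>R x = - (of_nat (Suc k) *\<^sub>R x)"
      by (simp only: of_int_minus of_int_of_nat_eq scaleR_minus_left)
    then show ?thesis using add_subgroup_minus[OF L nat[of "Suc k"]] by simp
  qed
qed

lemma add_subgroup_image_inner:
  assumes L: "add_subgroup L"
  shows "add_subgroup ((\<lambda>x. p \<bullet> x) ` L)"
  unfolding add_subgroup_def
proof (intro conjI ballI)
  show "0 \<in> (\<lambda>x. p \<bullet> x) ` L"
    by (rule rev_image_eqI[OF add_subgroup_zero[OF L]]) simp
  fix a b assume "a \<in> (\<lambda>x. p \<bullet> x) ` L" "b \<in> (\<lambda>x. p \<bullet> x) ` L"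
  then obtain x y where "x \<in> L" "y \<in> L" "a = p \<bullet> x" "b = p \<bullet> y" by blast
  show "a + b \<in> (\<lambda>x. p \<bullet> x) ` L"
    by (rule rev_image_eqI[OF add_subgroup_add[OF L \<open>x \<in> L\<close> \<open>y \<in> L\<close>]])
      (simp add: \<open>a = p \<bullet> x\<close> \<open>b = p \<bullet> y\<close> inner_add_right)
  show "- a \<in> (\<lambda>x. p \<bullet> x) ` L"
    by (rule rev_image_eqI[OF add_subgroup_minus[OF L \<open>x \<in> L\<close>]]) (simp add: \<open>a = p \<bullet> x\<close>)
qed

lemma Ints_add_subgroup_multiples:
  fixes S :: "real set"
  assumes S: "add_subgroup S" "S \<subseteq> \<int>" "S \<noteq> {0}"
  shows "\<exists>n::nat. n > 0 \<and> real n \<in> S \<and> (\<forall>x\<in>S. \<exists>m::int. x = of_int m * real n)"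
proof -
  define A where "A = {k::nat. k > 0 \<and> real k \<in> S}"
  obtain x where x: "x \<in> S" "x \<noteq> 0"
    using S(3) add_subgroup_zero[OF S(1)] by blast
  obtain k where k: "x = of_int k" using x(1) S(2) Ints_cases by blast
  have "nat \<bar>k\<bar> \<in> A"
    using x k add_subgroup_minus[OF S(1) x(1)] unfolding A_def by (cases "k > 0") auto
  define n where "n = (LEAST k. k \<in> A)"
  have n: "n > 0" "real n \<in> S"
    using LeastI[of "\<lambda>k. k \<in> A", OF \<open>nat \<bar>k\<bar> \<in> A\<close>] unfolding n_def A_def by auto
  have "\<exists>m::int. y = of_int m * real n" if y: "y \<in> S" for y
  proof -
    obtain w where w: "y = of_int w" using y S(2) Ints_cases by blast
    have "y - of_int (w div int n) *\<^sub>R real n \<in> S"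
      using S(1) y n(2) by (intro add_subgroup_diff add_subgroup_scaleR_of_int)
    also have "y - of_int (w div int n) *\<^sub>R real n = of_int (w - w div int n * int n)"
      using w by simp
    also have "\<dots> = of_int (w mod int n)"
      by (simp only: minus_div_mult_eq_mod)
    finally have mod_in: "real_of_int (w mod int n) \<in> S" .
    have r: "0 \<le> w mod int n" "w mod int n < int n" using n(1) by simp_all
    have "w mod int n = 0"
    proof (rule ccontr)
      assume "w mod int n \<noteq> 0"
      then have "nat (w mod int n) \<in> A" using r mod_in unfolding A_def by simp
      then have "n \<le> nat (w mod int n)" unfolding n_def by (rule Least_le)
      then show False using r by linarith
    qed
    then have "w = w div int n * int n"
      by (metis minus_div_mult_eq_mod eq_iff_diff_eq_0)
    then show ?thesis using w by (metis of_int_mult of_int_of_nat_eq)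
  qed
  then show ?thesis using n by blast
qed

lemma add_subgroup_Int: "add_subgroup A \<Longrightarrow> add_subgroup B \<Longrightarrow> add_subgroup (A \<inter> B)"
  unfolding add_subgroup_def by blast

lemma subspace_imp_add_subgroup: "subspace V \<Longrightarrow> add_subgroup V"
  by (simp add: add_subgroup_def subspace_0 subspace_add subspace_neg)

lemma lattice_of_bounded_cover:
  assumes "lattice_of V L"
  shows "\<exists>B. \<forall>v\<in>V. \<exists>l\<in>L. norm (v - l) \<le> B"
proof -
  obtain K where K: "compact K" "V \<subseteq> (\<Union>l\<in>L. (\<lambda>k. l + k) ` K)"
    using assms unfolding lattice_of_def by blast
  obtain B where B: "\<forall>k\<in>K. norm k \<le> B"
    using compact_imp_bounded[OF K(1)] bounded_iff by blast
  have "\<exists>l\<in>L. norm (v - l) \<le> B" if "v \<in> V" for v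
  proof -
    obtain l k where "l \<in> L" "k \<in> K" "v = l + k" using K(2) \<open>v \<in> V\<close> by blast
    then have "norm (v - l) \<le> B" using B by simp
    then show ?thesis using \<open>l \<in> L\<close> by blast
  qed
  then show ?thesis by blast
qed

lemma lattice_ofI_bounded_cover:
  fixes L :: "'a::euclidean_space set"
  assumes V: "subspace V" and L: "L \<subseteq> V" "add_subgroup L"
    and "\<exists>e>0. \<forall>x\<in>L. x \<noteq> 0 \<longrightarrow> e \<le> norm x"
    and cover: "\<And>v. v \<in> V \<Longrightarrow> \<exists>l\<in>L. norm (v - l) \<le> B"
  shows "lattice_of V L"
proof -
  have "compact (V \<inter> cball 0 B)"
    by (intro closed_Int_compact closed_subspace V compact_cball)
  moreover have "V \<subseteq> (\<Union>l\<in>L. (\<lambda>k. l + k) ` (V \<inter> cball 0 B))"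
  proof
    fix v assume "v \<in> V"
    then obtain l where l: "l \<in> L" "norm (v - l) \<le> B" using cover by blast
    then have "v - l \<in> V \<inter> cball 0 B"
      using subspace_diff[OF V \<open>v \<in> V\<close>] L(1) by (auto simp: dist_norm norm_minus_commute)
    then show "v \<in> (\<Union>l\<in>L. (\<lambda>k. l + k) ` (V \<inter> cball 0 B))"
      by (intro UN_I[OF l(1)] rev_image_eqI[of "v - l"]) simp_all
  qed
  ultimately show ?thesis
    using assms unfolding lattice_of_def add_subgroup_def by blast
qed

lemma lattice_of_UNIV_not_in_hyperplane:
  fixes L :: "'a::euclidean_space set"
  assumes L: "lattice_of UNIV L" and "p \<noteq> 0"
  shows "\<exists>x\<in>L. p \<bullet> x \<noteq> 0"
proof (rule ccontr)
  assume "\<not> (\<exists>x\<in>L. p \<bullet> x \<noteq> 0)"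
  then have hyperplane: "p \<bullet> x = 0" if "x \<in> L" for x
    using that by blast
  obtain B where B: "\<forall>v. \<exists>l\<in>L. norm (v - l) \<le> B"
    using lattice_of_bounded_cover[OF L] by blast
  define v where "v = ((B + 1) / norm p) *\<^sub>R p"
  obtain l where l: "l \<in> L" "norm (v - l) \<le> B" using B by blast
  have "p \<bullet> v = (B + 1) / norm p * (norm p)\<^sup>2"
    by (simp add: v_def dot_square_norm)
  also have "\<dots> = (B + 1) * norm p"
    using \<open>p \<noteq> 0\<close> by (simp add: power2_eq_square)
  finally have "(B + 1) * norm p = p \<bullet> (v - l)"
    using hyperplane[OF l(1)] by (simp add: inner_diff_right)
  also have "\<dots> \<le> norm p * norm (v - l)" by (rule norm_cauchy_schwarz)
  also have "\<dots> \<le> norm p * B" using l(2) by (simp add: mult_left_mono)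
  finally show False using \<open>p \<noteq> 0\<close> by (simp add: algebra_simps)
qed

lemma lattice_hyperplane_generator:
  fixes L :: "'a::euclidean_space set"
  assumes L: "lattice_of UNIV L" and p: "p \<in> dual_lattice L" "p \<noteq> 0"
  obtains x1 :: 'a and n :: nat where "x1 \<in> L" "n > 0" "p \<bullet> x1 = real n"
    "\<And>l. l \<in> L \<Longrightarrow>
       \<exists>m::int. p \<bullet> l = of_int m * real n \<and> l - of_int m *\<^sub>R x1 \<in> L \<inter> {x. p \<bullet> x = 0}"
proof -
  have L_group: "add_subgroup L" by (rule lattice_of_imp_add_subgroup[OF L])
  define S where "S = (\<lambda>x. p \<bullet> x) ` L"
  have "add_subgroup S" unfolding S_def by (rule add_subgroup_image_inner[OF L_group])
  moreover have "S \<subseteq> \<int>" using p(1) unfolding S_def dual_lattice_def by auto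
  moreover have "S \<noteq> {0}"
  proof -
    obtain x0 where "x0 \<in> L" "p \<bullet> x0 \<noteq> 0"
      using lattice_of_UNIV_not_in_hyperplane[OF L p(2)] by blast
    then show ?thesis unfolding S_def by blast
  qed
  ultimately obtain n :: nat where n: "n > 0" "real n \<in> S"
    and multiples: "\<forall>y\<in>S. \<exists>m::int. y = of_int m * real n"
    using Ints_add_subgroup_multiples by blast
  obtain x1 where x1: "x1 \<in> L" "p \<bullet> x1 = real n" using n(2) unfolding S_def by auto
  have split: "\<exists>m::int. p \<bullet> l = of_int m * real n \<and> l - of_int m *\<^sub>R x1 \<in> L \<inter> {x. p \<bullet> x = 0}"
    if "l \<in> L" for l
  proof -
    obtain m :: int where m: "p \<bullet> l = of_int m * real n"
      using multiples \<open>l \<in> L\<close> unfolding S_def by blast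
    have "l - of_int m *\<^sub>R x1 \<in> L"
      using L_group \<open>l \<in> L\<close> x1(1) by (intro add_subgroup_diff add_subgroup_scaleR_of_int)
    moreover have "p \<bullet> (l - of_int m *\<^sub>R x1) = 0" using m x1(2) by (simp add: inner_diff_right)
    ultimately show ?thesis using m by blast
  qed
  show ?thesis by (rule that[OF x1(1) n(1) x1(2) split])
qed

lemma lattice_of_hyperplane_section:
  fixes L :: "'a::euclidean_space set"
  assumes L: "lattice_of UNIV L" and p: "p \<in> dual_lattice L" "p \<noteq> 0"
  shows "lattice_of {x. p \<bullet> x = 0} (L \<inter> {x. p \<bullet> x = 0})"
proof -
  obtain B where B: "\<forall>v. \<exists>l\<in>L. norm (v - l) \<le> B"
    using lattice_of_bounded_cover[OF L] by blast
  obtain x1 n where "x1 \<in> L" and n: "n > 0" and "p \<bullet> x1 = real n"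
    and split: "\<And>l. l \<in> L \<Longrightarrow>
       \<exists>m::int. p \<bullet> l = of_int m * real n \<and> l - of_int m *\<^sub>R x1 \<in> L \<inter> {x. p \<bullet> x = 0}"
    using lattice_hyperplane_generator[OF L p] by blast
  have cover: "\<exists>y\<in>L \<inter> {x. p \<bullet> x = 0}. norm (v - y) \<le> B + norm p * B * norm x1"
    if v: "p \<bullet> v = 0" for v
  proof -
    obtain l where l: "l \<in> L" "norm (v - l) \<le> B" using B by blast
    obtain m :: int where m: "p \<bullet> l = of_int m * real n" "l - of_int m *\<^sub>R x1 \<in> L \<inter> {x. p \<bullet> x = 0}"
      using split[OF l(1)] by blast
    have "\<bar>of_int m\<bar> \<le> \<bar>of_int m\<bar> * real n" using n by (simp add: mult_le_cancel_left1)
    also have "\<dots> = \<bar>p \<bullet> (v - l)\<bar>" using v m(1) by (simp add: inner_diff_right abs_mult)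
    also have "\<dots> \<le> norm p * norm (v - l)" by (rule Cauchy_Schwarz_ineq2)
    also have "\<dots> \<le> norm p * B" using l(2) by (simp add: mult_left_mono)
    finally have m_bound: "\<bar>of_int m\<bar> \<le> norm p * B" .
    have "norm (v - (l - of_int m *\<^sub>R x1)) = norm ((v - l) + of_int m *\<^sub>R x1)"
      by (simp add: algebra_simps)
    also have "\<dots> \<le> norm (v - l) + \<bar>of_int m\<bar> * norm x1"
      using norm_triangle_ineq[of "v - l" "of_int m *\<^sub>R x1"] by simp
    also have "\<dots> \<le> B + norm p * B * norm x1"
      using l(2) m_bound by (intro add_mono mult_right_mono) auto
    finally show ?thesis using m(2) by blast
  qed
  show ?thesis
  proof (rule lattice_ofI_bounded_cover)
    show "add_subgroup (L \<inter> {x. p \<bullet> x = 0})"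
      by (intro add_subgroup_Int lattice_of_imp_add_subgroup[OF L]
          subspace_imp_add_subgroup subspace_hyperplane)
    show "\<exists>e>0. \<forall>x\<in>L \<inter> {x. p \<bullet> x = 0}. x \<noteq> 0 \<longrightarrow> e \<le> norm x"
      using L unfolding lattice_of_def by blast
  qed (use cover subspace_hyperplane in auto)
qed

lemma dual_lattice_hyperplane_lift:
  fixes L :: "'a::euclidean_space set"
  assumes L: "lattice_of UNIV L" and p: "p \<in> dual_lattice L" "p \<noteq> 0"
    and q: "q \<in> dual_lattice (L \<inter> {x. p \<bullet> x = 0})"
  shows "\<exists>s0. \<forall>j::int. q + (s0 + of_int j) *\<^sub>R p \<in> dual_lattice L"
proof -
  obtain x1 n where x1: "x1 \<in> L" "n > 0" "p \<bullet> x1 = real n"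
    and split: "\<And>l. l \<in> L \<Longrightarrow>
       \<exists>m::int. p \<bullet> l = of_int m * real n \<and> l - of_int m *\<^sub>R x1 \<in> L \<inter> {x. p \<bullet> x = 0}"
    using lattice_hyperplane_generator[OF L p] by blast
  \<comment> \<open>Since L = L0 + Z x1, it suffices that the lift is integral on x1; s0 makes it vanish there.\<close>
  have "q + (- (q \<bullet> x1) / real n + of_int j) *\<^sub>R p \<in> dual_lattice L" for j :: int
    unfolding dual_lattice_def
  proof (intro CollectI ballI)
    fix l assume "l \<in> L"
    then obtain m :: int where m: "p \<bullet> l = of_int m * real n"
      and y: "l - of_int m *\<^sub>R x1 \<in> L \<inter> {x. p \<bullet> x = 0}"
      using split by blast
    have "q \<bullet> (l - of_int m *\<^sub>R x1) \<in> \<int>" using q y unfolding dual_lattice_def by blast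
    moreover have "(q + (- (q \<bullet> x1) / real n + of_int j) *\<^sub>R p) \<bullet> l
        = q \<bullet> (l - of_int m *\<^sub>R x1) + of_int (j * m * int n)"
      using m x1(2) by (simp add: inner_add_left inner_diff_right field_simps)
    ultimately show "(q + (- (q \<bullet> x1) / real n + of_int j) *\<^sub>R p) \<bullet> l \<in> \<int>"
      by simp
  qed
  then show ?thesis by blast
qed

lemma norm_add_scaleR_orthogonal_sq:
  fixes p q :: "'a::real_inner"
  assumes "p \<bullet> q = 0"
  shows "(norm (q + s *\<^sub>R p))\<^sup>2 = (norm q)\<^sup>2 + s\<^sup>2 * (norm p)\<^sup>2"
proof -
  have "orthogonal q (s *\<^sub>R p)"
    using assms unfolding orthogonal_def by (simp add: inner_commute)
  then have "(norm (q + s *\<^sub>R p))\<^sup>2 = (norm q)\<^sup>2 + (norm (s *\<^sub>R p))\<^sup>2"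
    by (rule norm_add_Pythagorean)
  then show ?thesis by (simp add: power_mult_distrib)
qed

lemma orthogonal_lift_in_dual_R:
  fixes p q :: "'a::euclidean_space"
  assumes "p \<bullet> q = 0" "q \<noteq> 0" "q + s *\<^sub>R p \<in> dual_lattice L"
    and "(norm q)\<^sup>2 + s\<^sup>2 * (norm p)\<^sup>2 \<le> r\<^sup>2" "0 \<le> r"
  shows "q + s *\<^sub>R p \<in> dual_R L r"
proof -
  have norm_sq: "(norm (q + s *\<^sub>R p))\<^sup>2 = (norm q)\<^sup>2 + s\<^sup>2 * (norm p)\<^sup>2"
    by (rule norm_add_scaleR_orthogonal_sq[OF assms(1)])
  have "0 < (norm q)\<^sup>2 + s\<^sup>2 * (norm p)\<^sup>2"
    using \<open>q \<noteq> 0\<close> by (intro add_pos_nonneg) simp_all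
  then have "0 < norm (q + s *\<^sub>R p)"
    unfolding norm_sq[symmetric] by simp
  moreover have "norm (q + s *\<^sub>R p) \<le> r"
    using assms(4,5) unfolding norm_sq[symmetric] by (rule power2_le_imp_le)
  ultimately show ?thesis using assms(3) unfolding dual_R_def by blast
qed

lemma int_translate_close:
  fixes s0 u T :: real
  assumes "\<bar>u\<bar> < T" "1/2 \<le> T"
  shows "\<exists>j::int. \<bar>s0 + of_int j\<bar> \<le> T \<and> \<bar>s0 + of_int j - u\<bar> < 1"
proof -
  define c where "c = \<lceil>u - s0\<rceil>"
  have c: "u \<le> s0 + of_int c" "s0 + of_int c < u + 1"
    unfolding c_def using ceiling_correct[of "u - s0"] by linarith+
  show ?thesis
  proof (cases "s0 + of_int c \<le> T")
    case True
    then show ?thesis using c assms by (intro exI[of _ c]) auto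
  next
    case False
    then show ?thesis using c assms by (intro exI[of _ "c - 1"]) auto
  qed
qed

lemma int_translate_unit:
  fixes s0 u :: real
  assumes "1/2 \<le> \<bar>u\<bar>"
  shows "\<exists>j::int. \<bar>s0 + of_int j\<bar> \<le> 1 \<and> \<bar>s0 + of_int j - u\<bar> \<le> \<bar>u\<bar>"
proof -
  define c where "c = \<lceil>- s0\<rceil>"
  have c: "0 \<le> s0 + of_int c" "s0 + of_int c < 1"
    unfolding c_def using ceiling_correct[of "- s0"] by linarith+
  show ?thesis
  proof (cases "u > 0")
    case True
    then show ?thesis using c assms by (intro exI[of _ c]) auto
  next
    case False
    then show ?thesis using c assms by (intro exI[of _ "c - 1"]) auto
  qed
qed

locale minimal_dual_vector =
  fixes L :: "'a::euclidean_space set" and \<Omega> p :: 'a and R :: real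
  assumes lattice: "lattice_of UNIV L"
    and p_dual_R: "p \<in> dual_R L R"
    and p_attains_alpha: "ereal (p \<bullet> \<Omega>) = alpha L \<Omega> R"
    and alpha_pos: "alpha L \<Omega> R > 0"
begin

abbreviation E :: "'a set" where "E \<equiv> {x. p \<bullet> x = 0}"

abbreviation L0 :: "'a set" where "L0 \<equiv> L \<inter> E"

definition beta :: ereal where
  "beta = (INF q\<in>E \<inter> dual_R L0 (sqrt 3 * R / 2). ereal \<bar>q \<bullet> \<Omega>\<bar>)"

lemma p_dual: "p \<in> dual_lattice L" and p_nonzero: "p \<noteq> 0" and norm_p_le: "norm p \<le> R"
  using p_dual_R by (auto simp: dual_R_def)

lemma R_pos: "0 < R"
  using p_nonzero norm_p_le zero_less_norm_iff[of p] by linarith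

lemma inner_p_pos: "0 < p \<bullet> \<Omega>"
  using alpha_pos by (simp flip: p_attains_alpha)

lemma inner_p_le:
  assumes "q \<in> dual_R L R"
  shows "p \<bullet> \<Omega> \<le> \<bar>q \<bullet> \<Omega>\<bar>"
proof -
  have "alpha L \<Omega> R \<le> ereal \<bar>q \<bullet> \<Omega>\<bar>"
    unfolding alpha_def using assms by (rule INF_lower)
  then show ?thesis by (simp flip: p_attains_alpha)
qed

lemma lattice_of_section: "lattice_of E L0"
  by (rule lattice_of_hyperplane_section[OF lattice p_dual p_nonzero])

lemma section_dual_RD:
  assumes "q \<in> E \<inter> dual_R L0 r"
  shows "p \<bullet> q = 0" "q \<noteq> 0" "q \<in> dual_lattice L0" "(norm q)\<^sup>2 \<le> r\<^sup>2"
  using assms by (auto simp: dual_R_def intro: power_mono)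

lemma inner_lift:
  "(q + s *\<^sub>R p) \<bullet> \<Omega> = (p \<bullet> \<Omega>) * (s - (- (q \<bullet> \<Omega>) / (p \<bullet> \<Omega>)))"
  using inner_p_pos by (simp add: inner_add_left field_simps)

lemma section_dual_lower_bound:
  assumes q: "q \<in> E \<inter> dual_R L0 (sqrt 3 * R / 2)"
  shows "(p \<bullet> \<Omega>) * (R / (2 * norm p)) \<le> \<bar>q \<bullet> \<Omega>\<bar>"
proof (rule ccontr)
  define a T u where "a = p \<bullet> \<Omega>" and "T = R / (2 * norm p)" and "u = - (q \<bullet> \<Omega>) / a"
  assume "\<not> a * T \<le> \<bar>q \<bullet> \<Omega>\<bar>"
  then have "\<bar>u\<bar> < T"
    using inner_p_pos unfolding a_def u_def by (simp add: abs_div field_simps)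
  moreover have T: "1/2 \<le> T"
    using p_nonzero norm_p_le unfolding T_def by (simp add: field_simps)
  ultimately obtain s where s: "\<bar>s\<bar> \<le> T" "\<bar>s - u\<bar> < 1" "q + s *\<^sub>R p \<in> dual_lattice L"
    using dual_lattice_hyperplane_lift[OF lattice p_dual p_nonzero section_dual_RD(3)[OF q]]
      int_translate_close by metis
  have "s\<^sup>2 * (norm p)\<^sup>2 \<le> T\<^sup>2 * (norm p)\<^sup>2"
    using s(1) T by (intro mult_right_mono) (simp_all add: abs_le_square_iff[symmetric])
  also have "\<dots> = R\<^sup>2 / 4"
    using p_nonzero unfolding T_def by (simp add: field_simps power2_eq_square)
  finally have "(norm q)\<^sup>2 + s\<^sup>2 * (norm p)\<^sup>2 \<le> R\<^sup>2"
    using section_dual_RD(4)[OF q] by (simp add: power_mult_distrib power_divide)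
  then have "q + s *\<^sub>R p \<in> dual_R L R"
    using section_dual_RD(1,2)[OF q] s(3) R_pos by (intro orthogonal_lift_in_dual_R) simp_all
  then have "a \<le> \<bar>a * (s - u)\<bar>"
    using inner_p_le inner_lift unfolding a_def u_def by metis
  also have "\<dots> < a"
    using s(2) inner_p_pos unfolding a_def by (simp add: abs_mult)
  finally show False by simp
qed

lemma section_dual_lift_sqrt7:
  assumes q: "q \<in> E \<inter> dual_R L0 (sqrt 3 * R / 2)"
  shows "\<exists>p'\<in>dual_R L (sqrt 7 * R / 2). \<bar>p' \<bullet> \<Omega>\<bar> \<le> \<bar>q \<bullet> \<Omega>\<bar>"
proof -
  define a u where "a = p \<bullet> \<Omega>" and "u = - (q \<bullet> \<Omega>) / a"
  have "1/2 \<le> R / (2 * norm p)"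
    using p_nonzero norm_p_le by (simp add: field_simps)
  then have "a * (1/2) \<le> \<bar>q \<bullet> \<Omega>\<bar>"
    using section_dual_lower_bound[OF q] inner_p_pos unfolding a_def
    by (meson mult_left_mono less_imp_le order_trans)
  then have "1/2 \<le> \<bar>u\<bar>"
    using inner_p_pos unfolding a_def u_def by (simp add: abs_div field_simps)
  then obtain s where s: "\<bar>s\<bar> \<le> 1" "\<bar>s - u\<bar> \<le> \<bar>u\<bar>" "q + s *\<^sub>R p \<in> dual_lattice L"
    using dual_lattice_hyperplane_lift[OF lattice p_dual p_nonzero section_dual_RD(3)[OF q]]
      int_translate_unit by metis
  have "s\<^sup>2 * (norm p)\<^sup>2 \<le> 1 * R\<^sup>2"
    using s(1) norm_p_le by (intro mult_mono power_mono) (simp_all add: abs_square_le_1)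
  then have "(norm q)\<^sup>2 + s\<^sup>2 * (norm p)\<^sup>2 \<le> (sqrt 7 * R / 2)\<^sup>2"
    using section_dual_RD(4)[OF q] by (simp add: power_mult_distrib power_divide)
  then have "q + s *\<^sub>R p \<in> dual_R L (sqrt 7 * R / 2)"
    using section_dual_RD(1,2)[OF q] s(3) R_pos by (intro orthogonal_lift_in_dual_R) simp_all
  moreover have "\<bar>(q + s *\<^sub>R p) \<bullet> \<Omega>\<bar> \<le> \<bar>q \<bullet> \<Omega>\<bar>"
  proof -
    have "\<bar>(q + s *\<^sub>R p) \<bullet> \<Omega>\<bar> = a * \<bar>s - u\<bar>"
      using inner_lift inner_p_pos unfolding a_def u_def by (simp add: abs_mult)
    also have "\<dots> \<le> a * \<bar>u\<bar>"
      using s(2) inner_p_pos unfolding a_def by (simp add: mult_left_mono)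
    also have "\<dots> = \<bar>q \<bullet> \<Omega>\<bar>"
      using inner_p_pos unfolding a_def u_def by (simp add: abs_div)
    finally show ?thesis .
  qed
  ultimately show ?thesis by blast
qed

lemma beta_lower_bound: "ereal ((p \<bullet> \<Omega>) * (R / (2 * norm p))) \<le> beta"
  unfolding beta_def
  by (rule INF_greatest) (simp only: ereal_less_eq(3) section_dual_lower_bound)

lemma alpha_div_beta_le: "alpha L \<Omega> R / (beta * ereal (norm p)) \<le> ereal (2 / R)"
proof (cases beta)
  case (real b)
  have "0 < (p \<bullet> \<Omega>) * (R / (2 * norm p))"
    using inner_p_pos R_pos p_nonzero by simp
  moreover have "(p \<bullet> \<Omega>) * (R / (2 * norm p)) \<le> b"
    using beta_lower_bound real by simp
  ultimately have "(p \<bullet> \<Omega>) / (b * norm p) \<le> 2 / R"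
    using R_pos p_nonzero by (simp add: field_simps)
  moreover have "0 < b"
    using \<open>0 < _\<close> \<open>_ \<le> b\<close> by linarith
  ultimately show ?thesis
    using real p_nonzero R_pos by (simp flip: p_attains_alpha)
next
  case PInf
  then show ?thesis using p_nonzero R_pos by (simp flip: p_attains_alpha)
next
  case MInf
  then show ?thesis using beta_lower_bound by simp
qed

lemma alpha_le_twice_beta: "alpha L \<Omega> R \<le> 2 * beta"
proof -
  have "p \<bullet> \<Omega> \<le> 2 * ((p \<bullet> \<Omega>) * (R / (2 * norm p)))"
    using inner_p_pos p_nonzero norm_p_le by (simp add: field_simps)
  then have "ereal (p \<bullet> \<Omega>) \<le> 2 * ereal ((p \<bullet> \<Omega>) * (R / (2 * norm p)))"
    by simp
  also have "\<dots> \<le> 2 * beta"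
    using beta_lower_bound by (rule ereal_mult_left_mono) simp
  finally show ?thesis by (simp flip: p_attains_alpha)
qed

lemma alpha_sqrt7_le_beta: "alpha L \<Omega> (sqrt 7 * R / 2) \<le> beta"
  unfolding beta_def
proof (rule INF_greatest)
  fix q assume "q \<in> E \<inter> dual_R L0 (sqrt 3 * R / 2)"
  then obtain p' where p': "p' \<in> dual_R L (sqrt 7 * R / 2)" "\<bar>p' \<bullet> \<Omega>\<bar> \<le> \<bar>q \<bullet> \<Omega>\<bar>"
    using section_dual_lift_sqrt7 by blast
  have "alpha L \<Omega> (sqrt 7 * R / 2) \<le> ereal \<bar>p' \<bullet> \<Omega>\<bar>"
    unfolding alpha_def using p'(1) by (rule INF_lower)
  also have "\<dots> \<le> ereal \<bar>q \<bullet> \<Omega>\<bar>" using p'(2) by simp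
  finally show "alpha L \<Omega> (sqrt 7 * R / 2) \<le> ereal \<bar>q \<bullet> \<Omega>\<bar>" .
qed

end

lemma relative_dual_R_eq:
  "{q\<in>V. (\<forall>x\<in>M. q \<bullet> x \<in> \<int>) \<and> 0 < norm q \<and> norm q \<le> r} = V \<inter> dual_R M r"
  by (auto simp: dual_R_def dual_lattice_def)

theorem lemma8p2:
  fixes L :: "'a::euclidean_space set" and \<Omega> p :: 'a and R :: real
  assumes "lattice_of UNIV L"
    and "R > 0"
    and "dual_R L R \<noteq> {}"
    and "p \<in> dual_R L R"
    and "ereal (p \<bullet> \<Omega>) = alpha L \<Omega> R"
    and "alpha L \<Omega> R > 0"
  shows "lattice_of {x. p \<bullet> x = 0} (L \<inter> {x. p \<bullet> x = 0})
    \<and> (let E = {x. p \<bullet> x = 0}; L0 = L \<inter> E;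
           \<beta> = (INF q\<in>{q\<in>E. (\<forall>x\<in>L0. q \<bullet> x \<in> \<int>) \<and> 0 < norm q \<and> norm q \<le> sqrt 3 * R / 2}.
                  ereal \<bar>q \<bullet> \<Omega>\<bar>)
       in alpha L \<Omega> R / (\<beta> * ereal (norm p)) \<le> ereal (2 / R)
          \<and> alpha L \<Omega> R \<le> 2 * \<beta>
          \<and> alpha L \<Omega> (sqrt 7 * R / 2) \<le> \<beta>)"
proof -
  \<comment> \<open>The hypotheses R > 0 and dual_R L R \<noteq> {} are implied by p \<in> dual_R L R.\<close>
  interpret minimal_dual_vector L \<Omega> p R
    using assms by unfold_locales
  show ?thesis
    unfolding Let_def relative_dual_R_eq beta_def[symmetric]
    using lattice_of_section alpha_div_beta_le alpha_le_twice_beta alpha_sqrt7_le_beta by blast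
qed

end
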